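(* Let $C>0$ be a sufficiently large constant, let $\frac{C\log n}{n}\le p\le n^{-2/3}$, let $0<\alpha\le 1/100$, and let $G\sim G(n,p)$. Let $B$ be the set of vertices of $G$ with degree at least $pn+(1-\alpha)\sqrt{2pn\log n}$. Then with high probability both of the following hold: (1) $|B|\le n^{1/10}$; (2) every vertex $v$ has at most $100$ neighbours in $B\cup N(B\setminus\{v\})$, where moreover $100\le \sqrt{2pn\log n}/10^{20}$.
   Context: $G(n,p)$ is the binomial random graph on $n$ vertices with edge probability $p$; "with high probability" means with probability tending to $1$ as $n\to\infty$. For a set $S$ of vertices, $N(S)=N_G(S)$ denotes the external neighbourhood of $S$ in $G$, i.e. the set of vertices not in $S$ having a neighbour in $S$. *)

theory Defs
  imports "HOL-Probability.Probability"
begin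

text \<open>Vertex set of G(n,p) is {0..<n}; a graph is encoded by the indicator
  function of its edge set, an edge being a 2-element set {i,j} with i,j < n.\<close>

definition all_pairs :: "nat \<Rightarrow> nat set set" where
  "all_pairs n = {e. \<exists>i j. i < j \<and> j < n \<and> e = {i, j}}"

definition gnp :: "nat \<Rightarrow> real \<Rightarrow> (nat set \<Rightarrow> bool) pmf" where
  "gnp n p = Pi_pmf (all_pairs n) False (\<lambda>_. bernoulli_pmf p)"

definition adj :: "(nat set \<Rightarrow> bool) \<Rightarrow> nat \<Rightarrow> nat \<Rightarrow> bool" where
  "adj G u v \<longleftrightarrow> u \<noteq> v \<and> G {u, v}"

definition degree :: "nat \<Rightarrow> (nat set \<Rightarrow> bool) \<Rightarrow> nat \<Rightarrow> nat" where
  "degree n G v = card {w \<in> {..<n}. adj G v w}"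

definition ext_nbhd :: "nat \<Rightarrow> (nat set \<Rightarrow> bool) \<Rightarrow> nat set \<Rightarrow> nat set" where
  "ext_nbhd n G S = {w \<in> {..<n}. w \<notin> S \<and> (\<exists>u\<in>S. adj G u w)}"

definition high_deg :: "nat \<Rightarrow> real \<Rightarrow> real \<Rightarrow> (nat set \<Rightarrow> bool) \<Rightarrow> nat set" where
  "high_deg n p \<alpha> G = {v \<in> {..<n}.
      real (degree n G v) \<ge> p * real n + (1 - \<alpha>) * sqrt (2 * p * real n * ln (real n))}"

end

theory Submission
  imports Defs "HOL-Real_Asymp.Real_Asymp"
begin

text \<open>
  A fixed vertex has degree at least pn + (1 - alpha) sqrt (2pn log n) with probability at most
  about n^(-(1 - alpha)^2) <= 2 n^(-24/25); this is the exponential-moment (Chernoff) bound with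
  parameter x = (1 - alpha) sqrt (2pn log n) / (pn). The bound survives prescribing the edges of a
  configuration on at most 11 vertices: after discarding their edges inside the configuration,
  the edge sets of the high-degree vertices are disjoint from each other and from the prescribed
  edges, so everything is independent and a placement of a configuration with e edges and m marked
  vertices in B occurs with probability at most p^e (2 n^(-24/25))^m.

  Markov's inequality gives |B| <= n^(1/10) w.h.p., and a union bound over the at most n^k
  placements shows, for p <= n^(-2/3), that w.h.p. G contains no path of length two with both ends
  in B, no K_{2,7}, and no vertex joined by five paths of length two, with distinct middle vertices
  outside B, to five distinct vertices of B. In such a graph a vertex v has at most one neighbour in
  B, and its other neighbours in N(B - {v}) are attached to at most four vertices of B, each of
  which has at most six common neighbours with v: at most 1 + 4 * 6 = 25 in all.
\<close>

section \<open>Exponential moments of independent edges\<close>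

lemma exp_mult_card_eq_prod:
  assumes "finite S"
  shows "exp (l * real (card {x\<in>S. P x})) = (\<Prod>x\<in>S. if P x then exp l else 1)"
proof -
  have "(\<Prod>x\<in>S. if P x then exp l else 1) = exp l ^ card (S \<inter> {x. P x})"
    using assms by (simp add: prod.If_cases)
  also have "S \<inter> {x. P x} = {x\<in>S. P x}" by blast
  finally show ?thesis by (metis exp_of_nat_mult mult.commute)
qed

lemma expectation_prod_bernoulli_Pi_pmf:
  fixes h :: "'a \<Rightarrow> bool \<Rightarrow> real"
  assumes "finite A" and "0 \<le> p" and "p \<le> 1" and "\<And>e b. 0 \<le> h e b"
  shows "measure_pmf.expectation (Pi_pmf A d (\<lambda>_. bernoulli_pmf p)) (\<lambda>G. \<Prod>e\<in>A. h e (G e))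
           = (\<Prod>e\<in>A. p * h e True + (1 - p) * h e False)"
  using assms by (subst expectation_prod_Pi_pmf) (auto simp: integrable_measure_pmf_finite mult.commute)

lemma prod_split_disjoint_family:
  fixes f :: "'a \<Rightarrow> 'c::comm_monoid_mult"
  assumes "finite A" and "F \<subseteq> A" and "\<And>u. u \<in> U \<Longrightarrow> E u \<subseteq> A"
    and "finite U" and "disjoint_family_on E U" and "\<And>u. u \<in> U \<Longrightarrow> E u \<inter> F = {}"
    and "\<And>e. e \<in> A - (F \<union> (\<Union>u\<in>U. E u)) \<Longrightarrow> f e = 1"
  shows "(\<Prod>e\<in>A. f e) = (\<Prod>e\<in>F. f e) * (\<Prod>u\<in>U. \<Prod>e\<in>E u. f e)"
proof -
  have fin_E: "finite (E u)" if "u \<in> U" for u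
    using assms(1,3) that finite_subset by blast
  have "(\<Prod>e\<in>A. f e) = (\<Prod>e\<in>F \<union> (\<Union>u\<in>U. E u). f e)"
    using assms by (intro prod.mono_neutral_right) auto
  also have "\<dots> = (\<Prod>e\<in>F. f e) * (\<Prod>e\<in>(\<Union>u\<in>U. E u). f e)"
  proof (rule prod.union_disjoint)
    show "F \<inter> (\<Union>u\<in>U. E u) = {}" using assms(6) by blast
    show "finite F" using assms(1,2) by (rule finite_subset[rotated])
    show "finite (\<Union>u\<in>U. E u)" using assms(4) fin_E by blast
  qed
  also have "(\<Prod>e\<in>(\<Union>u\<in>U. E u). f e) = (\<Prod>u\<in>U. \<Prod>e\<in>E u. f e)"
    using assms(4,5) fin_E by (intro prod.UNION_disjoint) (auto simp: disjoint_family_on_def)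
  finally show ?thesis .
qed

lemma pmf_prob_le_expectation_divide:
  fixes g :: "'a \<Rightarrow> real"
  assumes "finite (set_pmf M)" and "0 < c" and "\<And>x. 0 \<le> g x" and "\<And>x. x \<in> S \<Longrightarrow> c \<le> g x"
  shows "measure_pmf.prob M S \<le> measure_pmf.expectation M g / c"
proof -
  have "measure_pmf.prob M S \<le> measure_pmf.prob M {x \<in> space (measure_pmf M). c \<le> g x}"
    using assms(4) by (intro measure_pmf.finite_measure_mono) auto
  also have "\<dots> \<le> measure_pmf.expectation M g / c"
    using assms(1-3) by (intro integral_Markov_inequality_measure integrable_measure_pmf_finite) auto
  finally show ?thesis .
qed

lemma bernoulli_joint_tail_bound:
  fixes F :: "'a set" and E :: "'b \<Rightarrow> 'a set" and p l m :: real
  assumes "finite A" and "F \<subseteq> A" and "\<And>u. u \<in> U \<Longrightarrow> E u \<subseteq> A"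
    and "finite U" and "disjoint_family_on E U" and EF: "\<And>u. u \<in> U \<Longrightarrow> E u \<inter> F = {}"
    and "0 \<le> p" and "p \<le> 1" and "0 \<le> l"
  shows "measure_pmf.prob (Pi_pmf A d (\<lambda>_. bernoulli_pmf p))
           {G. (\<forall>e\<in>F. G e) \<and> (\<forall>u\<in>U. m \<le> real (card {e\<in>E u. G e}))}
         \<le> p ^ card F * (\<Prod>u\<in>U. exp (- l * m) * (1 + p * (exp l - 1)) ^ card (E u))"
proof -
  define M where "M = Pi_pmf A d (\<lambda>_. bernoulli_pmf p)"
  define EE where "EE = (\<Union>u\<in>U. E u)"
  define h where "h e b = (if e \<in> F then of_bool b
       else if e \<in> EE then (if b then exp l else 1) else (1::real))" for e b
  define g where "g G = (\<Prod>e\<in>A. h e (G e))" for G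
  note prod_split = prod_split_disjoint_family[OF assms(1-6)]
  have in_E: "e \<notin> F \<and> e \<in> EE" if "u \<in> U" "e \<in> E u" for u e
    using EF that unfolding EE_def by auto
  have fin_E: "finite (E u)" if "u \<in> U" for u
    using assms(1,3) that finite_subset by blast
  have g_eq: "g G = (\<Prod>e\<in>F. of_bool (G e)) * (\<Prod>u\<in>U. exp (l * real (card {e\<in>E u. G e})))" for G
    unfolding g_def using in_E fin_E
    by (subst prod_split) (auto simp: h_def EE_def exp_mult_card_eq_prod intro!: prod.cong)
  have "measure_pmf.expectation M g = (\<Prod>e\<in>A. p * h e True + (1 - p) * h e False)"
    unfolding M_def g_def using assms by (intro expectation_prod_bernoulli_Pi_pmf) (auto simp: h_def)
  also have "\<dots> = (\<Prod>e\<in>A. if e \<in> F then p else if e \<in> EE then 1 + p * (exp l - 1) else 1)"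
    by (intro prod.cong) (auto simp: h_def algebra_simps)
  also have "\<dots> = p ^ card F * (\<Prod>u\<in>U. (1 + p * (exp l - 1)) ^ card (E u))"
    using in_E by (subst prod_split) (auto simp: EE_def cong: prod.cong)
  finally have expectation_g:
    "measure_pmf.expectation M g = p ^ card F * (\<Prod>u\<in>U. (1 + p * (exp l - 1)) ^ card (E u))" .
  have c_le_g: "exp (l * m) ^ card U \<le> g G"
    if "\<forall>e\<in>F. G e" and "\<forall>u\<in>U. m \<le> real (card {e\<in>E u. G e})" for G
  proof -
    have "exp (l * m) ^ card U = (\<Prod>u\<in>U. exp (l * m))" by simp
    also have "\<dots> \<le> (\<Prod>u\<in>U. exp (l * real (card {e\<in>E u. G e})))"
      using that(2) \<open>0 \<le> l\<close> by (intro prod_mono) (auto intro: mult_left_mono)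
    also have "\<dots> = g G" using that(1) by (simp add: g_eq)
    finally show ?thesis .
  qed
  have "measure_pmf.prob M {G. (\<forall>e\<in>F. G e) \<and> (\<forall>u\<in>U. m \<le> real (card {e\<in>E u. G e}))}
      \<le> measure_pmf.expectation M g / exp (l * m) ^ card U"
  proof (rule pmf_prob_le_expectation_divide)
    show "finite (set_pmf M)"
      unfolding M_def using \<open>finite A\<close> by (simp add: set_Pi_pmf finite_PiE_dflt)
    show "0 \<le> g G" for G
      unfolding g_def h_def by (intro prod_nonneg) auto
  qed (use c_le_g in auto)
  also have "\<dots> = p ^ card F * (\<Prod>u\<in>U. exp (- l * m) * (1 + p * (exp l - 1)) ^ card (E u))"
    unfolding expectation_g by (simp add: prod.distrib exp_minus divide_inverse power_inverse)
  finally show ?thesis unfolding M_def .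
qed

section \<open>The Chernoff estimate\<close>

lemma exp_le_cubic:
  fixes x :: real
  assumes "0 \<le> x" and "x \<le> 1"
  shows "exp x \<le> 1 + x + x^2/2 + x^3"
proof -
  obtain t where "\<bar>t\<bar> \<le> \<bar>x\<bar>" and exp_x: "exp x = (\<Sum>m<3. x ^ m / fact m) + exp t / fact 3 * x ^ 3"
    using Maclaurin_exp_le[of x 3] by blast
  have "exp t \<le> exp 1" using \<open>\<bar>t\<bar> \<le> \<bar>x\<bar>\<close> assms by simp
  also have "exp 1 \<le> (3::real)" using exp_le by simp
  finally have "exp t / fact 3 * x ^ 3 \<le> 3 / 6 * x ^ 3"
    using assms by (intro mult_right_mono) (auto simp: fact_numeral)
  moreover have "(\<Sum>m<3. x ^ m / fact m) = 1 + x + x^2/2"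
    by (simp add: numeral_3_eq_3 fact_numeral power2_eq_square)
  moreover have "0 \<le> x ^ 3" using assms by simp
  ultimately show ?thesis using exp_x by linarith
qed

lemma chernoff_exponent_le:
  fixes \<mu> x k :: real
  assumes "0 \<le> \<mu>" and "0 \<le> x" and "x \<le> 1/100" and "0 \<le> k" and "k \<le> 11"
  shows "- x * (\<mu> + \<mu> * x - k) + \<mu> * (exp x - 1) \<le> 11/100 - 49/100 * (\<mu> * x^2)"
proof -
  have "x^3 = x * x^2" by (simp add: power2_eq_square power3_eq_cube)
  also have "\<dots> \<le> 1/100 * x^2" using assms by (intro mult_right_mono) auto
  finally have "x^3 \<le> 1/100 * x^2" .
  then have "\<mu> * (exp x - 1) \<le> \<mu> * x + \<mu> * x^2 / 2 + \<mu> * x^2 / 100"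
    using exp_le_cubic[of x] assms mult_left_mono[of "exp x - 1" "x + x^2/2 + x^2/100" \<mu>]
    by (simp add: algebra_simps)
  moreover have "x * k \<le> 11/100"
    using mult_mono[of x "1/100" k 11] assms by simp
  ultimately show ?thesis by (simp add: algebra_simps power2_eq_square)
qed

lemma chernoff_bound_le:
  fixes p x \<mu> k :: real and N :: nat
  assumes "0 \<le> p" and "0 \<le> x" and "x \<le> 1/100" and "N * p \<le> \<mu>" and "0 \<le> k" and "k \<le> 11"
  shows "exp (- x * (\<mu> + \<mu> * x - k)) * (1 + p * (exp x - 1)) ^ N \<le> exp (11/100 - 49/100 * (\<mu> * x^2))"
proof -
  have "0 \<le> N * p" using assms(1) by simp
  then have "0 \<le> \<mu>" using assms(4) by linarith
  have "(1 + p * (exp x - 1)) ^ N \<le> exp (p * (exp x - 1)) ^ N"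
    using assms(1,2) by (intro power_mono) (auto simp: add.commute)
  also have "\<dots> = exp (N * p * (exp x - 1))" by (simp add: exp_of_nat_mult mult.assoc)
  also have "\<dots> \<le> exp (\<mu> * (exp x - 1))"
    using assms(2,4) by (simp add: mult_right_mono)
  finally have "exp (- x * (\<mu> + \<mu> * x - k)) * (1 + p * (exp x - 1)) ^ N
      \<le> exp (- x * (\<mu> + \<mu> * x - k)) * exp (\<mu> * (exp x - 1))"
    by simp
  also have "\<dots> = exp (- x * (\<mu> + \<mu> * x - k) + \<mu> * (exp x - 1))"
    by (rule exp_add[symmetric])
  also have "\<dots> \<le> exp (11/100 - 49/100 * (\<mu> * x^2))"
    using chernoff_exponent_le[of \<mu> x k] \<open>0 \<le> \<mu>\<close> assms by simp
  finally show ?thesis .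
qed

section \<open>Graphs without the forbidden configurations\<close>

lemma ex_distinct_list_of_card_ge:
  assumes "finite X" and "k \<le> card X"
  obtains xs where "distinct xs" and "length xs = k" and "set xs \<subseteq> X"
proof -
  obtain Y where "Y \<subseteq> X" and "card Y = k"
    using obtain_subset_with_card_n[OF assms(2)] by blast
  moreover obtain ys where "set ys = Y" and "distinct ys"
    using finite_distinct_list[OF finite_subset[OF \<open>Y \<subseteq> X\<close> assms(1)]] by blast
  ultimately show ?thesis
    using that[of ys] distinct_card[of ys] by auto
qed

lemma card_le_mult_card_image:
  assumes "finite W" and "\<And>u. u \<in> f ` W \<Longrightarrow> card {w\<in>W. f w = u} \<le> k"
  shows "card W \<le> k * card (f ` W)"
proof -
  have "W = (\<Union>u\<in>f ` W. {w\<in>W. f w = u})" by blast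
  then have "card W \<le> (\<Sum>u\<in>f ` W. card {w\<in>W. f w = u})"
    using card_UN_le[of "f ` W" "\<lambda>u. {w\<in>W. f w = u}"] \<open>finite W\<close> by simp
  also have "\<dots> \<le> k * card (f ` W)"
    using sum_mono[of "f ` W" "\<lambda>u. card {w\<in>W. f w = u}" "\<lambda>_. k"] assms(2) by (simp add: mult.commute)
  finally show ?thesis .
qed

lemma pair_in_all_pairs:
  assumes "a < n" and "b < n" and "a \<noteq> b"
  shows "{a, b} \<in> all_pairs n"
proof (cases "a < b")
  case True
  then show ?thesis using assms unfolding all_pairs_def by blast
next
  case False
  then have "b < a" using assms by simp
  then show ?thesis using assms unfolding all_pairs_def by (auto simp: insert_commute)
qed

lemma finite_all_pairs: "finite (all_pairs n)"
  by (rule finite_subset[of _ "Pow {..<n}"]) (auto simp: all_pairs_def)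

lemma degree_le_card_edges_leaving:
  assumes "finite S" and "u \<in> S"
  shows "degree n G u \<le> card {e \<in> (\<lambda>y. {u, y}) ` ({..<n} - S). G e} + card S"
proof -
  have "inj_on (\<lambda>y. {u, y}) {y \<in> {..<n} - S. G {u, y}}"
    using \<open>u \<in> S\<close> by (auto simp: inj_on_def doubleton_eq_iff)
  moreover have "{e \<in> (\<lambda>y. {u, y}) ` ({..<n} - S). G e} = (\<lambda>y. {u, y}) ` {y \<in> {..<n} - S. G {u, y}}"
    by auto
  ultimately have card_eq: "card {e \<in> (\<lambda>y. {u, y}) ` ({..<n} - S). G e} = card {y \<in> {..<n} - S. G {u, y}}"
    by (simp add: card_image)
  have "{w \<in> {..<n}. adj G u w} \<subseteq> {y \<in> {..<n} - S. G {u, y}} \<union> S"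
    unfolding adj_def by auto
  then have "degree n G u \<le> card ({y \<in> {..<n} - S. G {u, y}} \<union> S)"
    unfolding degree_def using assms by (intro card_mono) auto
  also have "\<dots> \<le> card {y \<in> {..<n} - S. G {u, y}} + card S" by (rule card_Un_le)
  finally show ?thesis unfolding card_eq .
qed

text \<open>
  A configuration on the labels 0, ..., k - 1 consists of a set Ep of pairs (a, b), a < b, that must
  be edges, and a set Up of labels that must be mapped into B; pattern_at places label i at the
  vertex xs ! i.
\<close>

definition pattern_at :: "(nat set \<Rightarrow> bool) \<Rightarrow> nat set \<Rightarrow> (nat \<times> nat) set \<Rightarrow> nat set \<Rightarrow> nat list \<Rightarrow> bool" where
  "pattern_at G B Ep Up xs \<longleftrightarrow> (\<forall>(a, b)\<in>Ep. G {xs ! a, xs ! b}) \<and> (\<forall>j\<in>Up. xs ! j \<in> B)"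

definition has_pattern :: "nat \<Rightarrow> (nat set \<Rightarrow> bool) \<Rightarrow> nat set \<Rightarrow> nat \<Rightarrow> (nat \<times> nat) set \<Rightarrow> nat set \<Rightarrow> bool" where
  "has_pattern n G B k Ep Up \<longleftrightarrow>
     (\<exists>xs. distinct xs \<and> set xs \<subseteq> {..<n} \<and> length xs = k \<and> pattern_at G B Ep Up xs)"

definition cherry_edges :: "(nat \<times> nat) set" where
  "cherry_edges = {0} \<times> {1, 2}"

definition K27_edges :: "(nat \<times> nat) set" where
  "K27_edges = {0, 1} \<times> {2..<9}"

definition spider_edges :: "(nat \<times> nat) set" where
  "spider_edges = (\<Union>i<5. {(0, i + 1), (i + 1, i + 6)})"

lemma card_cherry_edges: "card cherry_edges = 2"
  by (simp add: cherry_edges_def card_cartesian_product)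

lemma card_K27_edges: "card K27_edges = 14"
  by (simp add: K27_edges_def card_cartesian_product)

lemma card_spider_edges: "card spider_edges = 10"
  by (simp add: spider_edges_def lessThan_nat_numeral lessThan_Suc)

lemma edge_sets_of_pattern:
  assumes "distinct xs" and "set xs \<subseteq> {..<n}"
    and Ep: "Ep \<subseteq> {(a, b). a < b \<and> b < length xs}" and "Up \<subseteq> {..<length xs}"
  defines "F \<equiv> (\<lambda>(a, b). {xs ! a, xs ! b}) ` Ep"
    and "E \<equiv> \<lambda>j. (\<lambda>y. {xs ! j, y}) ` ({..<n} - set xs)"
  shows "F \<subseteq> all_pairs n" and "\<And>j. j \<in> Up \<Longrightarrow> E j \<subseteq> all_pairs n"
    and "disjoint_family_on E Up" and "\<And>j. E j \<inter> F = {}" and "card F = card Ep"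
proof -
  have xs_eq_iff: "xs ! i = xs ! j \<longleftrightarrow> i = j" if "i < length xs" "j < length xs" for i j
    using \<open>distinct xs\<close> that by (simp add: nth_eq_iff_index_eq)
  have xs_lt: "xs ! i < n" if "i < length xs" for i
    using assms(2) nth_mem[OF that] by auto
  have Ep_lt: "a < b" "a < length xs" "b < length xs" if "(a, b) \<in> Ep" for a b
    using that Ep by auto
  show "F \<subseteq> all_pairs n"
  proof
    fix e assume "e \<in> F"
    then obtain a b where "(a, b) \<in> Ep" and "e = {xs ! a, xs ! b}" by (auto simp: F_def)
    with Ep_lt[of a b] xs_eq_iff[of a b] xs_lt show "e \<in> all_pairs n"
      by (auto intro!: pair_in_all_pairs)
  qed
  show "E j \<subseteq> all_pairs n" if "j \<in> Up" for j
    using that assms(4) xs_lt by (auto simp: E_def intro!: pair_in_all_pairs)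
  show "disjoint_family_on E Up"
    unfolding disjoint_family_on_def
  proof (intro ballI impI)
    fix i j assume "i \<in> Up" "j \<in> Up" "i \<noteq> j"
    then have "xs ! i \<noteq> xs ! j" and "xs ! i \<in> set xs" and "xs ! j \<in> set xs"
      using assms(4) xs_eq_iff by auto
    then show "E i \<inter> E j = {}" by (auto simp: E_def doubleton_eq_iff)
  qed
  have "e \<subseteq> set xs" if "e \<in> F" for e
    using that Ep_lt by (auto simp: F_def)
  then show "E j \<inter> F = {}" for j
    by (auto simp: E_def)
  have "inj_on (\<lambda>(a, b). {xs ! a, xs ! b}) Ep"
  proof (rule inj_onI, clarify)
    fix a b a' b' assume "(a, b) \<in> Ep" "(a', b') \<in> Ep" "{xs ! a, xs ! b} = {xs ! a', xs ! b'}"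
    with Ep_lt[of a b] Ep_lt[of a' b'] show "a = a' \<and> b = b'"
      using xs_eq_iff[of a a'] xs_eq_iff[of a b'] xs_eq_iff[of b a'] xs_eq_iff[of b b']
      by (auto simp: doubleton_eq_iff)
  qed
  then show "card F = card Ep" unfolding F_def by (rule card_image)
qed

lemma card_common_nbrs_le_6:
  assumes "\<not> has_pattern n G B 9 K27_edges {}" and "u < n" and "v < n" and "u \<noteq> v"
  shows "card {x\<in>{..<n}. adj G v x \<and> adj G u x} \<le> 6"
proof (rule ccontr)
  assume "\<not> ?thesis"
  then have card_ge: "7 \<le> card {x\<in>{..<n}. adj G v x \<and> adj G u x}" by simp
  obtain cs where cs: "distinct cs" "length cs = 7" "set cs \<subseteq> {x\<in>{..<n}. adj G v x \<and> adj G u x}"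
    by (rule ex_distinct_list_of_card_ge[OF _ card_ge]) simp
  define xs where "xs = v # u # cs"
  have "v \<notin> set cs" "u \<notin> set cs" using cs(3) by (auto simp: adj_def)
  then have "distinct xs" and "set xs \<subseteq> {..<n}" and "length xs = 9"
    using cs assms by (auto simp: xs_def)
  moreover have "pattern_at G B K27_edges {} xs"
  proof -
    have "G {v, cs ! i} \<and> G {u, cs ! i}" if "i < 7" for i
    proof -
      have "cs ! i \<in> set cs" using cs(2) that by simp
      then show ?thesis using cs(3) by (auto simp: adj_def)
    qed
    moreover have "xs ! b = cs ! (b - 2)" if "2 \<le> b" for b
      using that by (simp add: xs_def nth_Cons' numeral_2_eq_2)
    ultimately show ?thesis
      by (auto simp: pattern_at_def K27_edges_def xs_def)
  qed
  ultimately show False using assms(1) unfolding has_pattern_def by blast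
qed

lemma card_nbrs_in_le_1:
  assumes "\<not> has_pattern n G B 3 cherry_edges {1, 2}" and "v < n"
  shows "card {w\<in>{..<n}. adj G v w \<and> w \<in> B} \<le> 1"
proof -
  have False if "w1 \<in> {..<n}" "adj G v w1" "w1 \<in> B" "w2 \<in> {..<n}" "adj G v w2" "w2 \<in> B" "w1 \<noteq> w2"
    for w1 w2
  proof -
    have "distinct [v, w1, w2]" and "set [v, w1, w2] \<subseteq> {..<n}"
      using that assms(2) by (auto simp: adj_def)
    moreover have "pattern_at G B cherry_edges {1, 2} [v, w1, w2]"
      using that by (auto simp: pattern_at_def cherry_edges_def adj_def)
    ultimately show False using assms(1) unfolding has_pattern_def by fastforce
  qed
  then show ?thesis
    unfolding One_nat_def by (subst card_le_Suc0_iff_eq) auto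
qed

lemma has_spider_pattern:
  assumes "distinct (v # ws @ us)" and "set (v # ws @ us) \<subseteq> {..<n}"
    and "length ws = 5" and "length us = 5"
    and legs: "\<And>i. i < 5 \<Longrightarrow> G {v, ws ! i} \<and> G {ws ! i, us ! i} \<and> us ! i \<in> B"
  shows "has_pattern n G B 11 spider_edges {6..<11}"
proof -
  define xs where "xs = v # ws @ us"
  have xs_nth: "xs ! 0 = v" "xs ! (i + 1) = ws ! i" "xs ! (i + 6) = us ! i" if "i < 5" for i
    using that \<open>length ws = 5\<close> by (simp_all add: xs_def nth_append)
  have "distinct xs" and "set xs \<subseteq> {..<n}" and "length xs = 11"
    using assms(1-4) by (simp_all add: xs_def)
  moreover have "pattern_at G B spider_edges {6..<11} xs"
    unfolding pattern_at_def spider_edges_def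
  proof (intro conjI ballI)
    fix e :: "nat \<times> nat" assume "e \<in> (\<Union>i<5. {(0, i + 1), (i + 1, i + 6)})"
    then obtain i where "i < 5" and "e = (0, i + 1) \<or> e = (i + 1, i + 6)" by blast
    then show "case e of (a, b) \<Rightarrow> G {xs ! a, xs ! b}"
      using xs_nth[of i] legs[of i] by auto
  next
    fix j :: nat assume "j \<in> {6..<11}"
    then have "j - 6 < 5" and "j = (j - 6) + 6" by auto
    then show "xs ! j \<in> B" using xs_nth(3)[of "j - 6"] legs[of "j - 6"] by metis
  qed
  ultimately show ?thesis unfolding has_pattern_def by blast
qed

lemma card_attachments_le_4:
  assumes "\<not> has_pattern n G B 11 spider_edges {6..<11}" and "v < n" and "B \<subseteq> {..<n}"
    and W: "W \<subseteq> {w\<in>{..<n}. adj G v w \<and> w \<notin> B}"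
    and f: "\<And>w. w \<in> W \<Longrightarrow> f w \<in> B \<and> f w \<noteq> v \<and> adj G (f w) w"
  shows "card (f ` W) \<le> 4"
proof (rule ccontr)
  assume "\<not> ?thesis"
  then have "5 \<le> card (f ` W)" by simp
  moreover have "finite W" using W by (rule finite_subset) simp
  ultimately obtain us where us: "distinct us" "length us = 5" "set us \<subseteq> f ` W"
    by (metis ex_distinct_list_of_card_ge finite_imageI)
  define ws where "ws = map (inv_into W f) us"
  have ws: "ws ! i \<in> W \<and> f (ws ! i) = us ! i" if "i < 5" for i
  proof -
    have "us ! i \<in> f ` W" using us(2,3) nth_mem[of i us] that by auto
    then show ?thesis using us(2) that by (simp add: ws_def inv_into_into f_inv_into_f)
  qed
  have "distinct ws" and "length ws = 5"
    using us by (auto simp: ws_def distinct_map inj_on_inv_into)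
  then have "set ws \<subseteq> W" using ws by (auto simp: in_set_conv_nth)
  have "set us \<subseteq> B" and "v \<notin> set us" using us f by auto
  moreover have "v \<notin> set ws" and "set ws \<inter> set us = {}"
    using \<open>set ws \<subseteq> W\<close> \<open>set us \<subseteq> B\<close> W by (auto simp: adj_def)
  ultimately have "distinct (v # ws @ us)" and "set (v # ws @ us) \<subseteq> {..<n}"
    using \<open>distinct ws\<close> us(1) \<open>set ws \<subseteq> W\<close> W assms(2,3) by auto
  moreover have "G {v, ws ! i} \<and> G {ws ! i, us ! i} \<and> us ! i \<in> B" if "i < 5" for i
  proof -
    have "us ! i \<in> set us" using us(2) that by simp
    then show ?thesis
      using ws[OF that] W f[of "ws ! i"] \<open>set us \<subseteq> B\<close> by (auto simp: adj_def insert_commute)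
  qed
  ultimately show False
    using has_spider_pattern[of v ws us n G B] assms(1) \<open>length ws = 5\<close> us(2) by blast
qed

lemma card_nbrs_in_or_ext_nbhd_le_25:
  assumes no_cherry: "\<not> has_pattern n G B 3 cherry_edges {1, 2}"
    and no_K27: "\<not> has_pattern n G B 9 K27_edges {}"
    and no_spider: "\<not> has_pattern n G B 11 spider_edges {6..<11}"
    and "v < n" and "B \<subseteq> {..<n}"
  shows "card {w\<in>{..<n}. adj G v w \<and> w \<in> B \<union> ext_nbhd n G (B - {v})} \<le> 25"
proof -
  define W where "W = {w\<in>{..<n}. adj G v w \<and> w \<notin> B \<and> w \<in> ext_nbhd n G (B - {v})}"
  define f where "f w = (SOME u. u \<in> B \<and> u \<noteq> v \<and> adj G u w)" for w
  have f: "f w \<in> B \<and> f w \<noteq> v \<and> adj G (f w) w" if "w \<in> W" for w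
    unfolding f_def by (rule someI_ex) (use that in \<open>auto simp: W_def ext_nbhd_def\<close>)
  have "card W \<le> 6 * card (f ` W)"
  proof (rule card_le_mult_card_image)
    fix u assume "u \<in> f ` W"
    then have "u \<noteq> v" and "u < n" using f \<open>B \<subseteq> {..<n}\<close> by auto
    have "{w\<in>W. f w = u} \<subseteq> {x\<in>{..<n}. adj G v x \<and> adj G u x}"
      using f by (auto simp: W_def)
    then have "card {w\<in>W. f w = u} \<le> card {x\<in>{..<n}. adj G v x \<and> adj G u x}"
      by (intro card_mono) auto
    also have "\<dots> \<le> 6"
      using card_common_nbrs_le_6[OF no_K27 \<open>u < n\<close> \<open>v < n\<close> \<open>u \<noteq> v\<close>] .
    finally show "card {w\<in>W. f w = u} \<le> 6" .
  qed (simp add: W_def)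
  also have "\<dots> \<le> 24"
    using card_attachments_le_4[OF no_spider \<open>v < n\<close> \<open>B \<subseteq> {..<n}\<close> _ f, of W] by (auto simp: W_def)
  finally have "card W \<le> 24" .
  have "{w\<in>{..<n}. adj G v w \<and> w \<in> B \<union> ext_nbhd n G (B - {v})} \<subseteq> {w\<in>{..<n}. adj G v w \<and> w \<in> B} \<union> W"
    by (auto simp: W_def)
  then have "card {w\<in>{..<n}. adj G v w \<and> w \<in> B \<union> ext_nbhd n G (B - {v})}
      \<le> card ({w\<in>{..<n}. adj G v w \<and> w \<in> B} \<union> W)"
    by (intro card_mono) (auto simp: W_def)
  also have "\<dots> \<le> card {w\<in>{..<n}. adj G v w \<and> w \<in> B} + card W" by (rule card_Un_le)
  finally show ?thesis
    using card_nbrs_in_le_1[OF no_cherry \<open>v < n\<close>] \<open>card W \<le> 24\<close> by linarith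
qed

section \<open>Probabilities in G(n,p)\<close>

definition good_graphs :: "nat \<Rightarrow> real \<Rightarrow> real \<Rightarrow> (nat set \<Rightarrow> bool) set" where
  "good_graphs n p \<alpha> = {G. let B = high_deg n p \<alpha> G in
     real (card B) \<le> n powr (1/10) \<and>
     (\<forall>v < n. card {w \<in> {..<n}. adj G v w \<and> w \<in> B \<union> ext_nbhd n G (B - {v})} \<le> 100) \<and>
     100 \<le> sqrt (2 * p * n * ln n) / 10^20}"

lemma good_graphs_if_no_configurations:
  fixes n :: nat and p \<alpha> :: real and G :: "nat set \<Rightarrow> bool"
  defines "B \<equiv> high_deg n p \<alpha> G"
  assumes "card B \<le> n powr (1/10)" and "100 \<le> sqrt (2 * p * n * ln n) / 10^20"
    and "\<not> has_pattern n G B 3 cherry_edges {1, 2}" and "\<not> has_pattern n G B 9 K27_edges {}"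
    and "\<not> has_pattern n G B 11 spider_edges {6..<11}"
  shows "G \<in> good_graphs n p \<alpha>"
proof -
  have "B \<subseteq> {..<n}" unfolding B_def high_deg_def by auto
  then have "card {w \<in> {..<n}. adj G v w \<and> w \<in> B \<union> ext_nbhd n G (B - {v})} \<le> 25" if "v < n" for v
    using card_nbrs_in_or_ext_nbhd_le_25 assms(4-6) that by blast
  then show ?thesis
    using assms(2,3) unfolding good_graphs_def B_def Let_def by fastforce
qed

text \<open>
  The four terms bound the probabilities of |B| > n^(1/10) and of a cherry, a K_{2,7} and a spider,
  with p replaced by n^(-2/3) and the probability of a vertex being in B by 2 n^(-24/25).
\<close>

definition failure_bound :: "nat \<Rightarrow> real" where
  "failure_bound n =
     n * (2 * n powr (-24/25)) / n powr (1/10)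
     + n ^ 3 * ((n powr (-2/3)) ^ 2 * (2 * n powr (-24/25)) ^ 2)
     + n ^ 9 * (n powr (-2/3)) ^ 14
     + n ^ 11 * ((n powr (-2/3)) ^ 10 * (2 * n powr (-24/25)) ^ 5)"

text \<open>
  The constant C of the theorem is taken to be 20000; this makes the Chernoff parameter x of
  high_degree_tail at most 1/100.
\<close>

locale gnp_regime =
  fixes n :: nat and p \<alpha> :: real
  assumes n_ge_2: "2 \<le> n" and p_le_1: "p \<le> 1" and ln_le_pn: "20000 * ln n \<le> p * n"
    and \<alpha>_pos: "0 < \<alpha>" and \<alpha>_le: "\<alpha> \<le> 1/100"
begin

lemma ln_n_pos: "0 < ln n"
  using n_ge_2 by simp

lemma p_pos: "0 < p"
proof -
  have "0 < p * n" using ln_le_pn ln_n_pos by linarith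
  then show ?thesis by (simp add: zero_less_mult_iff)
qed

lemma tail_parameter:
  defines "s \<equiv> sqrt (2 * p * n * ln n)"
  defines "x \<equiv> (1 - \<alpha>) * s / (p * n)"
  shows "0 \<le> x" and "x \<le> 1/100" and "p * n * x = (1 - \<alpha>) * s"
    and "p * n * x^2 = 2 * (1 - \<alpha>)^2 * ln n"
proof -
  define \<mu> where "\<mu> = p * n"
  have "0 < \<mu>" unfolding \<mu>_def using p_pos n_ge_2 by simp
  have "0 \<le> 2 * p * n * ln n"
    using p_pos ln_n_pos by (intro mult_nonneg_nonneg) auto
  then have "0 \<le> s" and s2: "s^2 = 2 * \<mu> * ln n"
    unfolding s_def \<mu>_def by (simp_all add: mult.assoc)
  have x_eq: "x = (1 - \<alpha>) * s / \<mu>" unfolding x_def \<mu>_def ..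
  show "0 \<le> x" unfolding x_eq using \<alpha>_le \<open>0 \<le> s\<close> \<open>0 < \<mu>\<close> by simp
  show "p * n * x = (1 - \<alpha>) * s" unfolding \<mu>_def[symmetric] x_eq using \<open>0 < \<mu>\<close> by simp
  show \<mu>x2: "p * n * x^2 = 2 * (1 - \<alpha>)^2 * ln n"
    unfolding \<mu>_def[symmetric] x_eq using s2 \<open>0 < \<mu>\<close>
    by (simp add: power_divide power_mult_distrib field_simps power2_eq_square)
  have "(1 - \<alpha>)^2 \<le> 1" using \<alpha>_pos \<alpha>_le by (simp add: power_le_one)
  then have "p * n * x^2 \<le> 2 * ln n"
    unfolding \<mu>x2 using ln_n_pos by (simp add: mult_right_le_one_le)
  also have "\<dots> \<le> p * n * (1/100)^2"
    using ln_le_pn by (simp add: power2_eq_square)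
  finally have "\<mu> * x^2 \<le> \<mu> * (1/100)^2" by (simp add: \<mu>_def)
  then have "x^2 \<le> (1/100)^2" using \<open>0 < \<mu>\<close> by simp
  then show "x \<le> 1/100" by (rule power2_le_imp_le) simp
qed

lemma high_degree_tail:
  defines "s \<equiv> sqrt (2 * p * n * ln n)"
  defines "x \<equiv> (1 - \<alpha>) * s / (p * n)"
  assumes "N \<le> n" and "0 \<le> k" and "k \<le> 11"
  shows "exp (- x * (p * n + (1 - \<alpha>) * s - k)) * (1 + p * (exp x - 1)) ^ N
           \<le> 2 * n powr (-24/25)"
proof -
  note x = tail_parameter[folded s_def, folded x_def]
  have "exp (- x * (p * n + (1 - \<alpha>) * s - k)) * (1 + p * (exp x - 1)) ^ N
      = exp (- x * (p * n + p * n * x - k)) * (1 + p * (exp x - 1)) ^ N"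
    unfolding x(3) ..
  also have "\<dots> \<le> exp (11/100 - 49/100 * (p * n * x^2))"
    using p_pos x(1,2) assms(3-5) by (intro chernoff_bound_le) (auto simp: mult_right_mono)
  also have "\<dots> \<le> exp (11/100 - 24/25 * ln n)"
  proof -
    have "24/25 * ln n \<le> 49/100 * (2 * (99/100)^2 * ln n)"
      using ln_n_pos by (simp add: power2_eq_square)
    also have "\<dots> \<le> 49/100 * (2 * (1 - \<alpha>)^2 * ln n)"
      using \<alpha>_le ln_n_pos by (intro mult_left_mono mult_right_mono power_mono) auto
    finally show ?thesis unfolding x(4) by simp
  qed
  also have "\<dots> = exp (11/100) * n powr (-24/25)"
    using n_ge_2 by (simp add: powr_def mult.commute flip: exp_add)
  also have "\<dots> \<le> 2 * n powr (-24/25)"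
  proof -
    have "exp (11/100::real) \<le> 1 + 11/100 + (11/100)^2/2 + (11/100)^3"
      by (rule exp_le_cubic) auto
    also have "\<dots> \<le> 2" by (simp add: power2_eq_square power3_eq_cube)
    finally show ?thesis by (intro mult_right_mono) auto
  qed
  finally show ?thesis .
qed

lemma prob_pattern_at_le:
  assumes "distinct xs" and "set xs \<subseteq> {..<n}" and "length xs \<le> 11"
    and "Ep \<subseteq> {(a, b). a < b \<and> b < length xs}" and "Up \<subseteq> {..<length xs}"
  shows "measure_pmf.prob (gnp n p) {G. pattern_at G (high_deg n p \<alpha> G) Ep Up xs}
           \<le> p ^ card Ep * (2 * n powr (-24/25)) ^ card Up"
proof -
  define s where "s = sqrt (2 * p * n * ln n)"
  define x where "x = (1 - \<alpha>) * s / (p * n)"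
  define m where "m = p * n + (1 - \<alpha>) * s - length xs"
  define F where "F = (\<lambda>(a, b). {xs ! a, xs ! b}) ` Ep"
  define E where "E j = (\<lambda>y. {xs ! j, y}) ` ({..<n} - set xs)" for j
  note edge_sets = edge_sets_of_pattern[OF assms(1,2,4,5), folded F_def E_def]
  note x_nonneg = tail_parameter(1)[folded s_def, folded x_def]
  \<comment> \<open>A marked vertex loses at most length xs of its edges by ignoring those inside the
    configuration; the remaining edge sets E j are disjoint and avoid the prescribed edges F.\<close>
  have "{G. pattern_at G (high_deg n p \<alpha> G) Ep Up xs}
      \<subseteq> {G. (\<forall>e\<in>F. G e) \<and> (\<forall>j\<in>Up. m \<le> real (card {e\<in>E j. G e}))}"
  proof safe
    fix G assume G: "pattern_at G (high_deg n p \<alpha> G) Ep Up xs"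
    then show "G e" if "e \<in> F" for e
      using that by (auto simp: F_def pattern_at_def)
    fix j assume "j \<in> Up"
    then have "xs ! j \<in> set xs" using assms(5) by auto
    then have "degree n G (xs ! j) \<le> card {e\<in>E j. G e} + length xs"
      using degree_le_card_edges_leaving[of "set xs" "xs ! j" n G] assms(1)
      by (simp add: E_def distinct_card)
    moreover have "p * n + (1 - \<alpha>) * s \<le> degree n G (xs ! j)"
      using G \<open>j \<in> Up\<close> by (auto simp: pattern_at_def high_deg_def s_def)
    ultimately show "m \<le> real (card {e\<in>E j. G e})" unfolding m_def by linarith
  qed
  then have "measure_pmf.prob (gnp n p) {G. pattern_at G (high_deg n p \<alpha> G) Ep Up xs}
      \<le> measure_pmf.prob (gnp n p) {G. (\<forall>e\<in>F. G e) \<and> (\<forall>j\<in>Up. m \<le> real (card {e\<in>E j. G e}))}"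
    by (rule measure_pmf.finite_measure_mono) simp
  also have "\<dots> \<le> p ^ card F * (\<Prod>j\<in>Up. exp (- x * m) * (1 + p * (exp x - 1)) ^ card (E j))"
    unfolding gnp_def using edge_sets finite_all_pairs finite_subset[OF assms(5)] p_pos p_le_1 x_nonneg
    by (intro bernoulli_joint_tail_bound) auto
  also have "\<dots> \<le> p ^ card Ep * (\<Prod>j\<in>Up. 2 * n powr (-24/25))"
  proof (unfold edge_sets(5), intro mult_left_mono prod_mono conjI)
    fix j
    have "card (E j) \<le> card ({..<n} - set xs)" unfolding E_def by (rule card_image_le) simp
    also have "\<dots> \<le> n" by (simp add: card_Diff_subset_Int)
    finally show "exp (- x * m) * (1 + p * (exp x - 1)) ^ card (E j) \<le> 2 * n powr (-24/25)"
      unfolding x_def m_def s_def using assms(3) by (intro high_degree_tail) auto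
    show "0 \<le> exp (- x * m) * (1 + p * (exp x - 1)) ^ card (E j)"
      using p_pos x_nonneg by simp
  qed (use p_pos in simp)
  finally show ?thesis by simp
qed

lemma prob_has_pattern_le:
  assumes "k \<le> 11" and "Ep \<subseteq> {(a, b). a < b \<and> b < k}" and "Up \<subseteq> {..<k}" and "p \<le> r"
  shows "measure_pmf.prob (gnp n p) {G. has_pattern n G (high_deg n p \<alpha> G) k Ep Up}
           \<le> n ^ k * (r ^ card Ep * (2 * n powr (-24/25)) ^ card Up)"
proof -
  define T where "T = {xs. set xs \<subseteq> {..<n} \<and> length xs = k \<and> distinct xs}"
  have T_sub: "T \<subseteq> {xs. set xs \<subseteq> {..<n} \<and> length xs = k}" unfolding T_def by auto
  then have "finite T" by (rule finite_subset) (rule finite_lists_length_eq, simp)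
  have "card T \<le> n ^ k"
    using card_mono[OF finite_lists_length_eq T_sub] by (simp add: card_lists_length_eq)
  have "measure_pmf.prob (gnp n p) {G. has_pattern n G (high_deg n p \<alpha> G) k Ep Up}
      = measure_pmf.prob (gnp n p) (\<Union>xs\<in>T. {G. pattern_at G (high_deg n p \<alpha> G) Ep Up xs})"
    unfolding has_pattern_def T_def by (rule arg_cong[where f = "measure_pmf.prob _"]) blast
  also have "\<dots> \<le> (\<Sum>xs\<in>T. measure_pmf.prob (gnp n p) {G. pattern_at G (high_deg n p \<alpha> G) Ep Up xs})"
    using \<open>finite T\<close> by (rule measure_pmf.finite_measure_subadditive_finite) simp
  also have "\<dots> \<le> (\<Sum>xs\<in>T. p ^ card Ep * (2 * n powr (-24/25)) ^ card Up)"
    using assms by (intro sum_mono prob_pattern_at_le) (auto simp: T_def)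
  also have "\<dots> \<le> n ^ k * (p ^ card Ep * (2 * n powr (-24/25)) ^ card Up)"
    using \<open>card T \<le> n ^ k\<close> p_pos by (simp add: mult_right_mono flip: of_nat_power)
  also have "\<dots> \<le> n ^ k * (r ^ card Ep * (2 * n powr (-24/25)) ^ card Up)"
    using p_pos \<open>p \<le> r\<close> by (intro mult_left_mono mult_right_mono power_mono) auto
  finally show ?thesis .
qed

lemma prob_high_deg_le:
  assumes "v < n"
  shows "measure_pmf.prob (gnp n p) {G. v \<in> high_deg n p \<alpha> G} \<le> 2 * n powr (-24/25)"
  using prob_pattern_at_le[of "[v]" "{}" "{0}"] assms by (simp add: pattern_at_def)

lemma prob_card_high_deg_gt:
  "measure_pmf.prob (gnp n p) {G. n powr (1/10) < card (high_deg n p \<alpha> G)}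
     \<le> n * (2 * n powr (-24/25)) / n powr (1/10)"
proof -
  define M where "M = gnp n p"
  have "finite (set_pmf M)"
    unfolding M_def gnp_def using finite_all_pairs by (simp add: set_Pi_pmf finite_PiE_dflt)
  then have int: "integrable (measure_pmf M) f" for f :: "_ \<Rightarrow> real"
    by (rule integrable_measure_pmf_finite)
  have card_eq: "real (card (high_deg n p \<alpha> G)) = (\<Sum>v<n. indicator {G. v \<in> high_deg n p \<alpha> G} G)" for G
  proof -
    have "high_deg n p \<alpha> G = {v \<in> {..<n}. v \<in> high_deg n p \<alpha> G}"
      unfolding high_deg_def by auto
    then show ?thesis by (simp add: indicator_def sum.If_cases Int_def)
  qed
  have "measure_pmf.prob M {G. n powr (1/10) < card (high_deg n p \<alpha> G)}
      \<le> measure_pmf.prob M {G \<in> space (measure_pmf M). n powr (1/10) \<le> card (high_deg n p \<alpha> G)}"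
    by (rule measure_pmf.finite_measure_mono) auto
  also have "\<dots> \<le> measure_pmf.expectation M (\<lambda>G. real (card (high_deg n p \<alpha> G))) / n powr (1/10)"
    using n_ge_2 by (intro integral_Markov_inequality_measure int) auto
  also have "measure_pmf.expectation M (\<lambda>G. real (card (high_deg n p \<alpha> G)))
      = (\<Sum>v<n. measure_pmf.prob M {G. v \<in> high_deg n p \<alpha> G})"
    unfolding card_eq by (subst Bochner_Integration.integral_sum) (auto intro: int)
  also have "\<dots> \<le> n * (2 * n powr (-24/25))"
    using sum_mono[of "{..<n}" _ "\<lambda>_. 2 * n powr (-24/25)"] prob_high_deg_le by (simp add: M_def)
  finally show ?thesis unfolding M_def using n_ge_2 by (simp add: divide_right_mono)
qed

lemma ln_le_sqrt_deviation: "ln n \<le> sqrt (2 * p * n * ln n)"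
proof (rule real_le_rsqrt)
  have "ln n ^ 2 \<le> 20000 * ln n * ln n" using ln_n_pos by (simp add: power2_eq_square)
  also have "\<dots> \<le> 2 * p * n * ln n"
    using ln_le_pn ln_n_pos p_pos by (intro mult_right_mono) auto
  finally show "ln n ^ 2 \<le> 2 * p * n * ln n" .
qed

lemma prob_good_graphs_ge:
  assumes "p \<le> n powr (-2/3)" and "10^22 \<le> ln n"
  shows "1 - failure_bound n \<le> measure_pmf.prob (gnp n p) (good_graphs n p \<alpha>)"
proof -
  define M where "M = gnp n p"
  define E1 where "E1 = {G. n powr (1/10) < card (high_deg n p \<alpha> G)}"
  define E2 where "E2 = {G. has_pattern n G (high_deg n p \<alpha> G) 3 cherry_edges {1, 2}}"
  define E3 where "E3 = {G. has_pattern n G (high_deg n p \<alpha> G) 9 K27_edges {}}"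
  define E4 where "E4 = {G. has_pattern n G (high_deg n p \<alpha> G) 11 spider_edges {6..<11}}"
  have "100 \<le> sqrt (2 * p * n * ln n) / 10^20" using ln_le_sqrt_deviation assms(2) by simp
  then have "UNIV - (E1 \<union> E2 \<union> E3 \<union> E4) \<subseteq> good_graphs n p \<alpha>"
    unfolding E1_def E2_def E3_def E4_def by (auto intro!: good_graphs_if_no_configurations)
  then have "1 - measure_pmf.prob M (E1 \<union> E2 \<union> E3 \<union> E4) \<le> measure_pmf.prob M (good_graphs n p \<alpha>)"
    using measure_pmf.finite_measure_mono[of "UNIV - (E1 \<union> E2 \<union> E3 \<union> E4)" "good_graphs n p \<alpha>" M]
      measure_pmf.prob_compl[of "E1 \<union> E2 \<union> E3 \<union> E4" M] by simp
  moreover have "measure_pmf.prob M (E1 \<union> E2 \<union> E3 \<union> E4)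
      \<le> measure_pmf.prob M E1 + measure_pmf.prob M E2 + measure_pmf.prob M E3 + measure_pmf.prob M E4"
  proof -
    have Un_le: "measure_pmf.prob M (X \<union> Y) \<le> measure_pmf.prob M X + measure_pmf.prob M Y" for X Y
      by (rule measure_Un_le) auto
    show ?thesis
      using Un_le[of "E1 \<union> E2 \<union> E3" E4] Un_le[of "E1 \<union> E2" E3] Un_le[of E1 E2] by linarith
  qed
  moreover have "measure_pmf.prob M E1 \<le> n * (2 * n powr (-24/25)) / n powr (1/10)"
    unfolding M_def E1_def by (rule prob_card_high_deg_gt)
  moreover have "measure_pmf.prob M E2
      \<le> n ^ 3 * ((n powr (-2/3)) ^ card cherry_edges * (2 * n powr (-24/25)) ^ card {1::nat, 2})"
    unfolding M_def E2_def using assms(1) by (intro prob_has_pattern_le) (auto simp: cherry_edges_def)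
  moreover have "measure_pmf.prob M E3
      \<le> n ^ 9 * ((n powr (-2/3)) ^ card K27_edges * (2 * n powr (-24/25)) ^ card ({}::nat set))"
    unfolding M_def E3_def using assms(1) by (intro prob_has_pattern_le) (auto simp: K27_edges_def)
  moreover have "measure_pmf.prob M E4
      \<le> n ^ 11 * ((n powr (-2/3)) ^ card spider_edges * (2 * n powr (-24/25)) ^ card {6::nat..<11})"
    unfolding M_def E4_def using assms(1) by (intro prob_has_pattern_le) (auto simp: spider_edges_def)
  ultimately show ?thesis
    unfolding M_def failure_bound_def card_cherry_edges card_K27_edges card_spider_edges
    by (simp add: numeral_2_eq_2)
qed

end

lemma eventually_gnp_regime:
  fixes p :: "nat \<Rightarrow> real"
  assumes "20000 \<le> C" and "0 < \<alpha>" and "\<alpha> \<le> 1/100"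
    and "\<forall>\<^sub>F n in at_top. C * ln n / n \<le> p n \<and> p n \<le> n powr (-2/3)"
  shows "\<forall>\<^sub>F n in at_top. gnp_regime n (p n) \<alpha> \<and> p n \<le> n powr (-2/3) \<and> 10^22 \<le> ln n"
proof -
  have "\<forall>\<^sub>F n in at_top. (10::real)^22 \<le> ln (real n)" by real_asymp
  with assms(4) eventually_ge_at_top[of 2] show ?thesis
  proof eventually_elim
    case (elim n)
    then have "0 < ln n" and "0 < real n" by auto
    have "n powr (-2/3) \<le> n powr 0"
      using elim by (intro powr_mono) auto
    then have "p n \<le> 1" using elim \<open>0 < real n\<close> by simp
    moreover have "20000 * ln n \<le> p n * n"
    proof -
      have "20000 * ln n \<le> C * ln n" using \<open>20000 \<le> C\<close> \<open>0 < ln n\<close> by simp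
      also have "\<dots> \<le> p n * n" using elim \<open>0 < real n\<close> by (simp add: pos_divide_le_eq)
      finally show ?thesis .
    qed
    ultimately show ?case
      using elim assms(2,3) \<open>0 < real n\<close> by (auto simp: gnp_regime_def)
  qed
qed

lemma failure_bound_tendsto_0: "failure_bound \<longlonglongrightarrow> 0"
  unfolding failure_bound_def by real_asymp

theorem proposition3p8:
  "\<exists>C0 > 0. \<forall>C \<ge> C0. \<forall>\<alpha>::real. \<forall>p :: nat \<Rightarrow> real.
     0 < \<alpha> \<and> \<alpha> \<le> 1/100 \<and>
     (\<forall>\<^sub>F n in at_top. C * ln (real n) / real n \<le> p n \<and> p n \<le> real n powr (-2/3)) \<longrightarrow>
     ((\<lambda>n. measure_pmf.prob (gnp n (p n))
        {G. let B = high_deg n (p n) \<alpha> G in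
            real (card B) \<le> real n powr (1/10) \<and>
            (\<forall>v < n. card {w \<in> {..<n}. adj G v w \<and> w \<in> B \<union> ext_nbhd n G (B - {v})} \<le> 100) \<and>
            100 \<le> sqrt (2 * p n * real n * ln (real n)) / 10^20})
      \<longlonglongrightarrow> 1)"
  unfolding good_graphs_def[symmetric]
proof (intro exI[of _ "20000::real"] conjI allI impI)
  fix C \<alpha> :: real and p :: "nat \<Rightarrow> real"
  assume "20000 \<le> C"
    and "0 < \<alpha> \<and> \<alpha> \<le> 1/100 \<and>
      (\<forall>\<^sub>F n in at_top. C * ln (real n) / real n \<le> p n \<and> p n \<le> real n powr (-2/3))"
  then have "\<forall>\<^sub>F n in at_top. gnp_regime n (p n) \<alpha> \<and> p n \<le> n powr (-2/3) \<and> 10^22 \<le> ln n"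
    by (intro eventually_gnp_regime) auto
  then have lower: "\<forall>\<^sub>F n in at_top. 1 - failure_bound n \<le> measure_pmf.prob (gnp n (p n)) (good_graphs n (p n) \<alpha>)"
    by (rule eventually_mono) (use gnp_regime.prob_good_graphs_ge in blast)
  have "(\<lambda>n. 1 - failure_bound n) \<longlonglongrightarrow> 1 - 0"
    by (intro tendsto_diff tendsto_const failure_bound_tendsto_0)
  then show "(\<lambda>n. measure_pmf.prob (gnp n (p n)) (good_graphs n (p n) \<alpha>)) \<longlonglongrightarrow> 1"
    by (intro tendsto_sandwich[OF lower _ _ tendsto_const]) simp_all
qed simp

end
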